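(* Let $a,b,c,d\in\mathbb R$, $\delta:=c+d-a-b$, with $a,b,\delta>0$ and $d-a,\ d-b,\ c+1-a,\ c-b\notin\{0,-1,-2,\dots\}$. Then $$\lim_{n\to\infty}\frac{{}_3F_2\left[\begin{matrix}-2n-2,\ c+n+1,\ d+n\\ a,\ b\end{matrix};1\right]}{{}_3F_2\left[\begin{matrix}-2n-1,\ c+n,\ d+n\\ a,\ b\end{matrix};1\right]}=-2.$$
   Context: ${}_3F_2\left[\begin{matrix}a_1,a_2,a_3\\ b_1,b_2\end{matrix};x\right]=\sum_{k\ge0}\frac{(a_1)_k(a_2)_k(a_3)_k}{(b_1)_k(b_2)_k}\frac{x^k}{k!}$ with $(x)_k=x(x+1)\cdots(x+k-1)$; when $a_1$ is a nonpositive integer the series terminates. *)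

theory Defs
  imports "HOL-Analysis.Analysis"
begin

text \<open>All terms with index k > m vanish since the Pochhammer
  symbol of -m vanishes there, so the finite sum equals the full series.\<close>
definition hyp3F2_term :: "nat \<Rightarrow> real \<Rightarrow> real \<Rightarrow> real \<Rightarrow> real \<Rightarrow> real \<Rightarrow> real" where
  "hyp3F2_term m a2 a3 b1 b2 x =
     (\<Sum>k\<le>m. pochhammer (- real m) k * pochhammer a2 k * pochhammer a3 k
              / (pochhammer b1 k * pochhammer b2 k) * x ^ k / fact k)"

end

theory Submission
  imports Defs
begin

(* Sheppard's transformation (two applications of the Chu-Vandermonde identity) rewrites both
   terminating series as series with lower parameters a and -(2n + delta), delta = c + d - a - b;
   the prefactors contribute a factor -(2n + delta + 1)/(b + 2n + 1) -> -1 to the ratio.  The terms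
   of the transformed numerator and denominator are termwise rational multiples of one sequence
   phi_k, and numerator - 2 * denominator is, up to a Gosper-type telescoping sum in phi, a sum of
   phi_k times coefficients of size O(1/n).  Since phi_k is positive for k <= 4n/5, where it is at
   most 25 times the denominator term, and decays geometrically beyond 7n/10, the sum of all
   |phi_k| is a bounded multiple of the denominator; hence the transformed ratio tends to 2. *)

section \<open>Sheppard's transformation\<close>

lemma pochhammer_shift:
  fixes x :: "'a::comm_semiring_1"
  shows "pochhammer x k * (x + of_nat k) = x * pochhammer (x + 1) k"
  by (metis pochhammer_Suc pochhammer_rec)

lemma pochhammer_minus_of_nat_div_fact:
  "pochhammer (- of_nat m :: 'a::field_char_0) k / fact k = (-1) ^ k * of_nat (m choose k)"
proof -
  have "of_nat (m choose k) = (-1) ^ k * pochhammer (- of_nat m :: 'a) k / fact k"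
    by (simp add: binomial_gbinomial gbinomial_pochhammer)
  then show ?thesis
    by (simp add: power_mult_distrib[symmetric] flip: power_add mult.assoc)
qed

lemma pochhammer_diff_binomial_sum:
  fixes x y :: "'a::comm_ring_1"
  shows "pochhammer (y - x) n =
    (\<Sum>i\<le>n. of_nat (n choose i) * (-1) ^ i * pochhammer x i * pochhammer (y + of_nat i) (n - i))"
proof -
  have reflect: "pochhammer (y + of_nat i) (n - i)
      = (-1) ^ (n - i) * pochhammer (1 - y - of_nat n) (n - i)"
    if "i \<le> n" for i
    using pochhammer_minus[of "- y - of_nat i" "n - i"] that
    by (simp add: of_nat_diff algebra_simps)
  have sign: "(-1::'a) ^ i * (-1) ^ (n - i) = (-1) ^ n" if "i \<le> n" for i
    using that by (metis power_add le_add_diff_inverse)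
  have "pochhammer (y - x) n = (-1) ^ n * pochhammer (x + (1 - y - of_nat n)) n"
    using pochhammer_minus[of "x - y" n] by (simp add: algebra_simps)
  also have "\<dots> = (\<Sum>i\<le>n. (-1) ^ n * (of_nat (n choose i) * pochhammer x i
      * pochhammer (1 - y - of_nat n) (n - i)))"
    by (simp add: pochhammer_binomial_sum sum_distrib_left)
  also have "\<dots> = (\<Sum>i\<le>n. of_nat (n choose i) * (-1) ^ i * pochhammer x i
      * pochhammer (y + of_nat i) (n - i))"
    by (rule sum.cong) (simp_all add: reflect sign[symmetric] algebra_simps)
  finally show ?thesis .
qed

lemma pochhammer_diff_div_pochhammer:
  fixes a B :: "'a::field_char_0"
  assumes "pochhammer a j \<noteq> 0"
  shows "pochhammer (a - B) j / pochhammer a j =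
    (\<Sum>l\<le>j. of_nat (j choose l) * (-1) ^ l * pochhammer B l / pochhammer a l)"
  unfolding pochhammer_diff_binomial_sum[where x = B and y = a] sum_divide_distrib
proof (rule sum.cong[OF refl])
  fix l assume "l \<in> {..j}"
  then have split: "pochhammer a j = pochhammer a l * pochhammer (a + of_nat l) (j - l)"
    by (simp add: pochhammer_product)
  with assms show "of_nat (j choose l) * (-1) ^ l * pochhammer B l
      * pochhammer (a + of_nat l) (j - l) / pochhammer a j
      = of_nat (j choose l) * (-1) ^ l * pochhammer B l / pochhammer a l"
    by (simp add: split field_simps)
qed

lemma sum_choose_choose_pochhammer:
  fixes A b :: "'a::comm_ring_1"
  assumes "l \<le> m"
  shows "(\<Sum>j\<le>m. of_nat (m choose j) * of_nat (j choose l) * pochhammer A j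
      * pochhammer (b - A) (m - j))
       = of_nat (m choose l) * pochhammer A l * pochhammer (b + of_nat l) (m - l)"
proof -
  let ?f = "\<lambda>j. of_nat (m choose j) * of_nat (j choose l) * pochhammer A j
      * pochhammer (b - A) (m - j)"
  have "(\<Sum>j\<le>m. ?f j) = (\<Sum>j\<in>{l..m}. ?f j)"
    by (rule sum.mono_neutral_right) (auto simp: binomial_eq_0)
  also have "\<dots> = (\<Sum>i\<le>m - l. ?f (i + l))"
    using sum.shift_bounds_cl_nat_ivl[of ?f 0 l "m - l"] assms by (simp add: atLeast0AtMost)
  also have "\<dots> = (\<Sum>i\<le>m - l. of_nat (m choose l) * pochhammer A l *
       (of_nat ((m - l) choose i) * pochhammer (A + of_nat l) i * pochhammer (b - A) (m - l - i)))"
  proof (rule sum.cong[OF refl])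
    fix i assume "i \<in> {..m - l}"
    then have "(m choose (i + l)) * ((i + l) choose l) = (m choose l) * ((m - l) choose i)"
      using choose_mult[of l "i + l" m] assms by simp
    then have "of_nat (m choose (i + l)) * of_nat ((i + l) choose l) =
        (of_nat (m choose l) * of_nat ((m - l) choose i) :: 'a)"
      by (metis of_nat_mult)
    moreover have "pochhammer A (i + l) = pochhammer A l * pochhammer (A + of_nat l) i"
      using pochhammer_product'[of A l i] by (simp add: add.commute)
    ultimately show "?f (i + l) = of_nat (m choose l) * pochhammer A l *
       (of_nat ((m - l) choose i) * pochhammer (A + of_nat l) i * pochhammer (b - A) (m - l - i))"
      by (simp add: algebra_simps)
  qed
  also have "\<dots> = of_nat (m choose l) * pochhammer A l * pochhammer (A + of_nat l + (b - A)) (m - l)"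
    by (simp only: sum_distrib_left pochhammer_binomial_sum)
  finally show ?thesis by (simp add: algebra_simps)
qed

lemma pochhammer_mult_hyp3F2_term:
  assumes b: "pochhammer b m \<noteq> 0"
  shows "pochhammer b m * hyp3F2_term m A B a b 1 =
    (\<Sum>l\<le>m. (-1) ^ l * pochhammer B l / pochhammer a l
      * (of_nat (m choose l) * pochhammer A l * pochhammer (b + of_nat l) (m - l)))"
proof -
  have "pochhammer b m * (pochhammer (- real m) l * pochhammer A l * pochhammer B l
      / (pochhammer a l * pochhammer b l) * 1 ^ l / fact l)
    = (-1) ^ l * pochhammer B l / pochhammer a l
      * (of_nat (m choose l) * pochhammer A l * pochhammer (b + of_nat l) (m - l))" if "l \<le> m" for l
  proof -
    have "pochhammer b m = pochhammer b l * pochhammer (b + of_nat l) (m - l)"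
      using that by (simp add: pochhammer_product)
    with b show ?thesis
      using pochhammer_minus_of_nat_div_fact[of m l, where 'a=real] by (simp add: field_simps)
  qed
  then show ?thesis
    unfolding hyp3F2_term_def sum_distrib_left by (intro sum.cong) simp_all
qed

lemma hyp3F2_term_expansion:
  assumes a: "pochhammer a m \<noteq> 0" and b: "pochhammer b m \<noteq> 0"
  shows "pochhammer b m * hyp3F2_term m A B a b 1 =
    (\<Sum>j\<le>m. of_nat (m choose j) * pochhammer A j * pochhammer (a - B) j * pochhammer (b - A) (m - j)
       / pochhammer a j)"
proof -
  let ?g = "\<lambda>l. (-1) ^ l * pochhammer B l / pochhammer a l"
  let ?T = "\<lambda>j l. of_nat (m choose j) * of_nat (j choose l) * pochhammer A j
      * pochhammer (b - A) (m - j)"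
  have termwise: "of_nat (m choose j) * pochhammer A j * pochhammer (a - B) j
      * pochhammer (b - A) (m - j)
      / pochhammer a j = (\<Sum>l\<le>m. ?g l * ?T j l)" if j: "j \<le> m" for j
  proof -
    have aj: "pochhammer a j \<noteq> 0"
      using a j by (rule pochhammer_neq_0_mono)
    have expand: "pochhammer (a - B) j / pochhammer a j =
        (\<Sum>l\<le>m. of_nat (j choose l) * (-1) ^ l * pochhammer B l / pochhammer a l)"
      unfolding pochhammer_diff_div_pochhammer[OF aj]
      by (rule sum.mono_neutral_left) (use j in \<open>auto simp: binomial_eq_0\<close>)
    have "of_nat (m choose j) * pochhammer A j * pochhammer (a - B) j * pochhammer (b - A) (m - j)
        / pochhammer a j
      = of_nat (m choose j) * pochhammer A j * pochhammer (b - A) (m - j)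
        * (pochhammer (a - B) j / pochhammer a j)"
      by simp
    also have "\<dots> = (\<Sum>l\<le>m. ?g l * ?T j l)"
      unfolding expand sum_distrib_left by (rule sum.cong) (simp_all add: mult_ac)
    finally show ?thesis .
  qed
  have "(\<Sum>j\<le>m. of_nat (m choose j) * pochhammer A j * pochhammer (a - B) j
      * pochhammer (b - A) (m - j)
      / pochhammer a j) = (\<Sum>j\<le>m. \<Sum>l\<le>m. ?g l * ?T j l)"
    by (rule sum.cong[OF refl], rule termwise) simp
  also have "\<dots> = (\<Sum>l\<le>m. ?g l * (\<Sum>j\<le>m. ?T j l))"
    by (subst sum.swap) (simp add: sum_distrib_left)
  also have "\<dots> = (\<Sum>l\<le>m. ?g l * (of_nat (m choose l) * pochhammer A l
      * pochhammer (b + of_nat l) (m - l)))"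
    by (rule sum.cong[OF refl]) (simp add: sum_choose_choose_pochhammer)
  also have "\<dots> = pochhammer b m * hyp3F2_term m A B a b 1"
    by (rule pochhammer_mult_hyp3F2_term[OF b, symmetric])
  finally show ?thesis ..
qed

lemma hyp3F2_term_transform:
  assumes "pochhammer a m \<noteq> 0" "pochhammer b m \<noteq> 0" "pochhammer (a + b - A - B) m \<noteq> 0"
  shows "hyp3F2_term m A B a b 1 =
    pochhammer (a + b - A - B) m / pochhammer b m
      * hyp3F2_term m (a - B) (a - A) a (a + b - A - B) 1"
proof -
  let ?e = "a + b - A - B"
  have "pochhammer b m * hyp3F2_term m A B a b 1
      = pochhammer ?e m * hyp3F2_term m (a - B) (a - A) a ?e 1"
    unfolding hyp3F2_term_expansion[OF assms(1,2)] hyp3F2_term_expansion[OF assms(1,3)]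
    by (rule sum.cong) (simp_all add: algebra_simps)
  with assms(2) show ?thesis by (simp add: field_simps)
qed

definition hyp3F2_coeff :: "nat \<Rightarrow> real \<Rightarrow> real \<Rightarrow> real \<Rightarrow> real \<Rightarrow> nat \<Rightarrow> real" where
  "hyp3F2_coeff m A B a b k =
     pochhammer (- real m) k * pochhammer A k
       * pochhammer B k / (pochhammer a k * pochhammer b k) / fact k"

lemma hyp3F2_term_1_eq_sum: "hyp3F2_term m A B a b 1 = (\<Sum>k\<le>m. hyp3F2_coeff m A B a b k)"
  by (simp add: hyp3F2_term_def hyp3F2_coeff_def)

lemma hyp3F2_coeff_0 [simp]: "hyp3F2_coeff m A B a b 0 = 1"
  by (simp add: hyp3F2_coeff_def)

lemma hyp3F2_coeff_Suc:
  "hyp3F2_coeff m A B a b (Suc k) = hyp3F2_coeff m A B a b k *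
     ((real k - real m) * (A + real k) * (B + real k)
       / ((a + real k) * (b + real k) * (real k + 1)))"
  by (simp add: hyp3F2_coeff_def pochhammer_Suc divide_inverse inverse_mult_distrib ac_simps)

lemma hyp3F2_coeff_telescope:
  assumes "\<And>k. k < N \<Longrightarrow> (a + real k) * (b + real k) \<noteq> 0"
  shows "(\<Sum>k<N. hyp3F2_coeff m A B a b k * ((real k - real m) * (A + real k) * (B + real k)
            - real k * (a + real k - 1) * (b + real k - 1)))
       = hyp3F2_coeff m A B a b N * (real N * (a + real N - 1) * (b + real N - 1))"
proof -
  let ?c = "hyp3F2_coeff m A B a b"
  let ?H = "\<lambda>k. real k * (a + real k - 1) * (b + real k - 1)"
  have step: "?c k * ((real k - real m) * (A + real k) * (B + real k)) = ?c (Suc k) * ?H (Suc k)"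
    if "k < N" for k
  proof -
    have "(a + real k) * (b + real k) * (real k + 1) \<noteq> 0"
      using assms[OF that] by simp
    moreover have "?H (Suc k) = (a + real k) * (b + real k) * (real k + 1)"
      by (simp add: algebra_simps)
    ultimately show ?thesis
      by (simp add: hyp3F2_coeff_Suc add.commute[of 1])
  qed
  have "(\<Sum>k<N. ?c k * ((real k - real m) * (A + real k) * (B + real k) - ?H k))
      = (\<Sum>k<N. ?c (Suc k) * ?H (Suc k) - ?c k * ?H k)"
    by (rule sum.cong) (simp_all add: step right_diff_distrib)
  also have "\<dots> = ?c N * ?H N"
    using sum_lessThan_telescope[of "\<lambda>k. ?c k * ?H k" N] by simp
  finally show ?thesis .
qed

lemma hyp3F2_coeff_contiguous_numer:
  "hyp3F2_coeff m A (B + 1) a b k * ((real m + 1) * B) =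
   hyp3F2_coeff (Suc m) A B a b k * ((real m + 1 - real k) * (B + real k))"
proof -
  let ?r = "pochhammer A k * inverse (pochhammer a k * pochhammer b k * fact k)"
  have m: "pochhammer (- real m) k * (real m + 1)
      = pochhammer (- real (Suc m)) k * (real m + 1 - real k)"
    using pochhammer_shift[of "- real (Suc m)" k] by (simp add: algebra_simps)
  have B: "pochhammer (B + 1) k * B = pochhammer B k * (B + real k)"
    using pochhammer_shift[of B k] by (simp add: algebra_simps)
  have "hyp3F2_coeff m A (B + 1) a b k * ((real m + 1) * B) =
      (pochhammer (- real m) k * (real m + 1)) * (pochhammer (B + 1) k * B) * ?r"
    by (simp add: hyp3F2_coeff_def divide_inverse ac_simps)
  also have "\<dots> = (pochhammer (- real (Suc m)) k * (real m + 1 - real k))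
      * (pochhammer B k * (B + real k)) * ?r"
    by (simp only: m B)
  also have "\<dots> = hyp3F2_coeff (Suc m) A B a b k * ((real m + 1 - real k) * (B + real k))"
    by (simp add: hyp3F2_coeff_def divide_inverse ac_simps)
  finally show ?thesis .
qed

lemma hyp3F2_coeff_contiguous_denom:
  assumes "pochhammer b (Suc k) \<noteq> 0"
  shows "hyp3F2_coeff m A B a b k * b = hyp3F2_coeff m A B a (b + 1) k * (b + real k)"
proof -
  let ?r = "pochhammer (- real m) k * pochhammer A k * pochhammer B k
      * inverse (pochhammer a k * fact k)"
  have shift: "pochhammer b k * (b + real k) = b * pochhammer (b + 1) k"
    by (rule pochhammer_shift)
  with assms have "pochhammer b k \<noteq> 0" "pochhammer (b + 1) k \<noteq> 0"
    by (auto simp: pochhammer_Suc)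
  with shift have b: "b / pochhammer b k = (b + real k) / pochhammer (b + 1) k"
    by (simp add: field_simps)
  have "hyp3F2_coeff m A B a b k * b = ?r * (b / pochhammer b k)"
    by (simp add: hyp3F2_coeff_def divide_inverse inverse_mult_distrib ac_simps)
  also have "\<dots> = ?r * ((b + real k) / pochhammer (b + 1) k)"
    by (simp only: b)
  also have "\<dots> = hyp3F2_coeff m A B a (b + 1) k * (b + real k)"
    by (simp add: hyp3F2_coeff_def divide_inverse inverse_mult_distrib ac_simps)
  finally show ?thesis .
qed

section \<open>Asymptotics of the transformed ratio\<close>

lemma quadratic_form_bound:
  fixes u v :: real
  assumes u: "1 \<le> u" and v: "0 \<le> v" "v \<le> 3 * u"
  shows "\<bar>q0 + q1 * v + q2 * v\<^sup>2 + p0 * u + p1 * u * v + r0 * u\<^sup>2\<bar>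
         \<le> (\<bar>q0\<bar> + 3 * \<bar>q1\<bar> + 9 * \<bar>q2\<bar> + \<bar>p0\<bar> + 3 * \<bar>p1\<bar> + \<bar>r0\<bar>) * u\<^sup>2"
proof -
  have uu: "u \<le> u\<^sup>2"
    using mult_left_mono[OF u, of u] u by (simp add: power2_eq_square)
  then have one: "1 \<le> u\<^sup>2"
    using u by linarith
  have "v \<le> 3 * u\<^sup>2"
    using v(2) uu by linarith
  moreover have "v\<^sup>2 \<le> 9 * u\<^sup>2" "u * v \<le> 3 * u\<^sup>2"
    using v mult_mono[OF v(2) v(2)] mult_left_mono[OF v(2), of u] u
    by (simp_all add: power2_eq_square)
  ultimately have vv: "v \<le> 3 * u\<^sup>2" "v\<^sup>2 \<le> 9 * u\<^sup>2" "u * v \<le> 3 * u\<^sup>2"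
    by simp_all
  have "\<bar>q0\<bar> \<le> \<bar>q0\<bar> * u\<^sup>2"
    using mult_left_mono[OF one, of "\<bar>q0\<bar>"] by simp
  moreover have "\<bar>q1 * v\<bar> \<le> \<bar>q1\<bar> * (3 * u\<^sup>2)"
    "\<bar>q2 * v\<^sup>2\<bar> \<le> \<bar>q2\<bar> * (9 * u\<^sup>2)" "\<bar>p0 * u\<bar> \<le> \<bar>p0\<bar> * u\<^sup>2"
    "\<bar>p1 * u * v\<bar> \<le> \<bar>p1\<bar> * (3 * u\<^sup>2)" "\<bar>r0 * u\<^sup>2\<bar> \<le> \<bar>r0\<bar> * u\<^sup>2"
    using u v uu vv by (simp_all add: abs_mult mult_left_mono mult.assoc)
  ultimately show ?thesis
    unfolding abs_le_iff by (simp add: algebra_simps)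
qed

lemma real_div_mult_bounds:
  fixes m d :: nat
  assumes "0 < d"
  shows "real d * real (m div d) \<le> real m" "real m < real d * (real (m div d) + 1)"
proof -
  have "real m = real d * real (m div d) + real (m mod d)"
    by (metis div_mult_mod_eq mult.commute of_nat_add of_nat_mult)
  moreover have "real (m mod d) < real d"
    using assms by simp
  ultimately show "real d * real (m div d) \<le> real m" "real m < real d * (real (m div d) + 1)"
    by (simp_all add: algebra_simps)
qed

lemma power_div_mult_le_root_power:
  fixes q :: real
  assumes q: "0 < q" "q < 1" and d: "0 < d"
  shows "q ^ (m div d) * q \<le> root d q ^ m"
proof -
  let ?\<theta> = "root d q"
  have \<theta>: "0 < ?\<theta>" "?\<theta> < 1" "?\<theta> ^ d = q"
    using q d by (simp_all add: real_root_gt_zero real_root_pow_pos)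
  have "q \<le> ?\<theta> ^ (m mod d)"
    using \<theta> d by (metis less_imp_le mod_less_divisor power_decreasing)
  then have "q ^ (m div d) * q \<le> q ^ (m div d) * ?\<theta> ^ (m mod d)"
    using q by simp
  also have "\<dots> = ?\<theta> ^ m"
    by (metis \<theta>(3) div_mult_mod_eq power_add power_mult mult.commute)
  finally show ?thesis .
qed

lemma real_mult_power_div_tendsto_0:
  fixes q :: real
  assumes q: "0 < q" "q < 1" and d: "0 < d"
  shows "(\<lambda>m. real m * q ^ (m div d)) \<longlonglongrightarrow> 0"
proof (rule Lim_null_comparison)
  have "real m * q ^ (m div d) \<le> real m * root d q ^ m / q" for m
  proof -
    have "real m * (q ^ (m div d) * q) \<le> real m * root d q ^ m"
      by (rule mult_left_mono[OF power_div_mult_le_root_power[OF q d]]) simp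
    then show ?thesis
      using q by (simp add: field_simps)
  qed
  then show "\<forall>\<^sub>F m in sequentially. norm (real m * q ^ (m div d)) \<le> real m * root d q ^ m / q"
    using q by (intro always_eventually allI) (simp add: abs_mult)
  have "(\<lambda>m. real m * root d q ^ m) \<longlonglongrightarrow> 0"
    using q d by (intro powser_times_n_limit_0) (simp add: real_root_gt_zero)
  then show "(\<lambda>m. real m * root d q ^ m / q) \<longlonglongrightarrow> 0"
    by (simp add: tendsto_divide_zero)
qed

text \<open>After the transformation and up to prefactors, the denominator and the numerator of the ratio
  in the theorem are the sums of \<open>denom_term n\<close> and \<open>numer_term n\<close>, with \<open>\<alpha> = c + 1 - a\<close>,
  \<open>\<beta> = d - a\<close> and \<open>\<delta> = c + d - a - b\<close>.\<close>

locale terminating_3F2_ratio =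
  fixes a \<alpha> \<beta> \<delta> :: real
  assumes a_pos: "0 < a" and \<delta>_pos: "0 < \<delta>"
begin

abbreviation denom_term :: "nat \<Rightarrow> nat \<Rightarrow> real" where
  "denom_term n \<equiv> hyp3F2_coeff (2*n+1) (- (real n + \<beta>)) (- (real n + \<alpha>) + 1) a (- (2 * real n + \<delta>))"

abbreviation numer_term :: "nat \<Rightarrow> nat \<Rightarrow> real" where
  "numer_term n \<equiv> hyp3F2_coeff (2*n+2) (- (real n + \<beta>)) (- (real n + \<alpha>)) a (- (2 * real n + \<delta> + 1))"

definition \<phi> :: "nat \<Rightarrow> nat \<Rightarrow> real" where
  "\<phi> n = hyp3F2_coeff (2*n+2) (- (real n + \<beta>)) (- (real n + \<alpha>)) a (- (2 * real n + \<delta>))"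

definition \<rho> :: "nat \<Rightarrow> nat \<Rightarrow> real" where
  "\<rho> n k = (2 * real n + 2 - real k) * (real n + \<alpha> - real k) * (real n + \<beta> - real k)
     / ((a + real k) * (2 * real n + \<delta> - real k) * (real k + 1))"

lemma \<phi>_0 [simp]: "\<phi> n 0 = 1"
  by (simp add: \<phi>_def)

lemma \<phi>_Suc: "\<phi> n (Suc k) = \<phi> n k * \<rho> n k"
proof -
  have "(real k - real (2*n+2)) * (- (real n + \<beta>) + real k) * (- (real n + \<alpha>) + real k)
      = - ((2 * real n + 2 - real k) * (real n + \<alpha> - real k) * (real n + \<beta> - real k))"
    by (simp add: algebra_simps)
  moreover have "(a + real k) * (- (2 * real n + \<delta>) + real k) * (real k + 1)
      = - ((a + real k) * (2 * real n + \<delta> - real k) * (real k + 1))"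
    by (simp add: algebra_simps)
  ultimately show ?thesis
    unfolding \<phi>_def \<rho>_def hyp3F2_coeff_Suc by (simp only: minus_divide_divide)
qed

lemma denom_term_eq_\<phi>:
  "denom_term n k * ((2 * real n + 2) * (real n + \<alpha>))
      = \<phi> n k * ((2 * real n + 2 - real k) * (real n + \<alpha> - real k))"
  using hyp3F2_coeff_contiguous_numer[of "2*n+1" "- (real n + \<beta>)" "- (real n + \<alpha>)" a
      "- (2 * real n + \<delta>)" k]
  unfolding \<phi>_def by (simp add: algebra_simps)

lemma pochhammer_numer_lower_nonzero:
  assumes "k \<le> 2*n+1"
  shows "pochhammer (- (2 * real n + \<delta> + 1)) (Suc k) \<noteq> 0"
  using assms \<delta>_pos by (auto simp: pochhammer_eq_0_iff)

lemma numer_term_eq_\<phi>: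
  assumes "k \<le> 2*n+1"
  shows "numer_term n k * (2 * real n + \<delta> + 1) = \<phi> n k * (2 * real n + \<delta> + 1 - real k)"
proof -
  have "- (2 * real n + \<delta> + 1) + 1 = - (2 * real n + \<delta>)"
    by simp
  then show ?thesis
    using hyp3F2_coeff_contiguous_denom[OF pochhammer_numer_lower_nonzero[OF assms],
        of "2*n+2" "- (real n + \<beta>)" "- (real n + \<alpha>)" a]
    unfolding \<phi>_def by (simp add: algebra_simps)
qed

definition P :: "nat \<Rightarrow> nat \<Rightarrow> real" where
  "P n k = (real k - real (2*n+2)) * (real k - (real n + \<beta>)) * (real k - (real n + \<alpha>))"

definition H :: "nat \<Rightarrow> nat \<Rightarrow> real" where
  "H n k = real k * (a + real k - 1) * (real k - 1 - (2 * real n + \<delta>))"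

lemma \<phi>_telescope: "(\<Sum>k\<le>2*n+1. \<phi> n k * (P n k - H n k)) = \<phi> n (2*n+1) * P n (2*n+1)"
proof -
  let ?c = "hyp3F2_coeff (2*n+2) (- (real n + \<beta>)) (- (real n + \<alpha>)) a (- (2 * real n + \<delta>))"
  have nonzero: "(a + real k) * (- (2 * real n + \<delta>) + real k) \<noteq> 0" if "k < 2*n+1" for k
    using that a_pos \<delta>_pos by auto
  have "(\<Sum>k<2*n+1. \<phi> n k * (P n k - H n k))
      = (\<Sum>k<2*n+1. ?c k * ((real k - real (2*n+2)) * (- (real n + \<beta>) + real k)
        * (- (real n + \<alpha>) + real k)
            - real k * (a + real k - 1) * (- (2 * real n + \<delta>) + real k - 1)))"
    by (rule sum.cong) (simp_all add: \<phi>_def P_def H_def algebra_simps)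
  also have "\<dots> = ?c (2*n+1) * (real (2*n+1) * (a + real (2*n+1) - 1)
      * (- (2 * real n + \<delta>) + real (2*n+1) - 1))"
    using nonzero by (rule hyp3F2_coeff_telescope)
  also have "\<dots> = \<phi> n (2*n+1) * H n (2*n+1)"
    by (simp add: \<phi>_def H_def algebra_simps)
  finally show ?thesis
    by (simp add: lessThan_Suc_atMost[symmetric] algebra_simps)
qed

definition Z :: "nat \<Rightarrow> real" where
  "Z n = (2 * real n + 2) * (real n + \<alpha>)"

definition R :: "nat \<Rightarrow> nat \<Rightarrow> real" where
  "R n k = (2 * real n + \<delta> + 1 - real k) / (2 * real n + \<delta> + 1)
     - 2 * ((2 * real n + 2 - real k) * (real n + \<alpha> - real k)) / Z n
     - (P n k - H n k) / (real n * Z n)"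

lemma numer_minus_twice_denom:
  assumes "real n + \<alpha> \<noteq> 0"
  shows "(\<Sum>k\<le>2*n+2. numer_term n k) - 2 * (\<Sum>k\<le>2*n+1. denom_term n k)
     = (\<Sum>k\<le>2*n+1. \<phi> n k * R n k) + \<phi> n (2*n+1) * P n (2*n+1) / (real n * Z n)
       + numer_term n (2*n+2)"
proof -
  have W: "2 * real n + \<delta> + 1 \<noteq> 0" and Z: "Z n \<noteq> 0"
    using \<delta>_pos assms by (auto simp: Z_def add_nonneg_pos)
  have numer_term: "numer_term n k = \<phi> n k
      * ((2 * real n + \<delta> + 1 - real k) / (2 * real n + \<delta> + 1))" if "k \<le> 2*n+1" for k
    using numer_term_eq_\<phi>[OF that] W by (simp add: field_simps)
  have denom_term: "denom_term n k = \<phi> n k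
      * ((2 * real n + 2 - real k) * (real n + \<alpha> - real k) / Z n)" for k
    using denom_term_eq_\<phi>[of n k] Z unfolding Z_def by (simp add: field_simps)
  have termwise: "numer_term n k - 2 * denom_term n k
      = \<phi> n k * R n k + \<phi> n k * (P n k - H n k) / (real n * Z n)"
    if "k \<le> 2*n+1" for k
    unfolding denom_term numer_term[OF that] R_def by (simp add: divide_inverse algebra_simps)
  have "(\<Sum>k\<le>2*n+1. numer_term n k) - 2 * (\<Sum>k\<le>2*n+1. denom_term n k)
      = (\<Sum>k\<le>2*n+1. \<phi> n k * R n k + \<phi> n k * (P n k - H n k) / (real n * Z n))"
    unfolding sum_distrib_left sum_subtractf[symmetric]
    by (rule sum.cong[OF refl], rule termwise) simp
  also have "\<dots> = (\<Sum>k\<le>2*n+1. \<phi> n k * R n k) + \<phi> n (2*n+1) * P n (2*n+1) / (real n * Z n)"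
    by (simp only: sum.distrib sum_divide_distrib[symmetric] \<phi>_telescope)
  finally show ?thesis
    by (simp add: sum.atMost_Suc[of _ "2*n+1", simplified] algebra_simps)
qed

text \<open>The multiplier \<open>1 / (n * Z n)\<close> of the telescoping sum in \<^term>\<open>R\<close> is chosen so that
  the cubic terms cancel here, which makes \<^term>\<open>R\<close> of order \<open>1/n\<close>.\<close>

lemma remainder_eq:
  assumes n: "0 < n" and \<alpha>: "real n + \<alpha> \<noteq> 0"
  shows "real n * Z n * R n k =
    2 * \<alpha> * \<beta> + ((\<delta> + 1) * (1 - a) - 2 * \<beta> - 2 * \<alpha> - \<alpha> * \<beta>) * real k + (a - \<delta> + \<alpha> + \<beta>) * (real k)\<^sup>2
    + (2 * \<beta> + 2 * \<alpha> * \<beta>) * real n + (2 - 2 * a - 3 * \<beta> - 2 * \<alpha>) * real n * real k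
      + 2 * \<beta> * (real n)\<^sup>2
    - real n * (1 - \<delta>) * (real n + \<alpha>) * real k / (2 * real n + \<delta> + 1)"
proof -
  define W where "W = 2 * real n + \<delta> + 1"
  have W: "W > 0" and Z: "Z n \<noteq> 0"
    using \<delta>_pos \<alpha> by (auto simp: W_def Z_def add_pos_nonneg)
  have "real n * Z n * R n k = real n * Z n * ((W - real k) / W)
      - 2 * real n * ((2 * real n + 2 - real k) * (real n + \<alpha> - real k)) - (P n k - H n k)"
    using n Z unfolding R_def W_def by (simp add: field_simps)
  also have "real n * Z n * ((W - real k) / W) =
      real n * Z n - real n * (real n + \<alpha>) * real k - real n * (1 - \<delta>) * (real n + \<alpha>) * real k / W"
  proof -
    have "Z n = (real n + \<alpha>) * W + (1 - \<delta>) * (real n + \<alpha>)"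
      unfolding Z_def W_def by (simp add: algebra_simps)
    then show ?thesis
      using W by (simp only:) (simp add: field_simps)
  qed
  finally show ?thesis
    unfolding W_def Z_def P_def H_def power2_eq_square by (simp add: algebra_simps)
qed

definition scale :: real where
  "scale = \<bar>\<alpha>\<bar> + \<bar>\<beta>\<bar> + a + \<delta> + 10"

lemma scale_bounds:
  "\<alpha> + 10 \<le> scale" "10 - \<alpha> \<le> scale" "\<beta> + 10 \<le> scale" "10 - \<beta> \<le> scale"
  "a + 10 \<le> scale" "\<delta> + 10 \<le> scale"
  using a_pos \<delta>_pos abs_ge_self[of \<alpha>] abs_ge_minus_self[of \<alpha>]
    abs_ge_self[of \<beta>] abs_ge_minus_self[of \<beta>]
  unfolding scale_def by linarith+

lemma Z_lower:
  assumes n: "25 * scale + 75 \<le> real n"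
  shows "(real n)\<^sup>2 \<le> Z n"
proof -
  have "2 * real n * (real n / 2) \<le> (2 * real n + 2) * (real n + \<alpha>)"
    by (rule mult_mono) (use n scale_bounds in linarith)+
  then show ?thesis
    by (simp add: Z_def power2_eq_square)
qed

lemma Z_pos:
  assumes n: "25 * scale + 75 \<le> real n"
  shows "0 < Z n"
  unfolding Z_def using n scale_bounds by (intro mult_pos_pos) linarith+

lemma remainder_fraction_bound:
  assumes n1: "1 \<le> real n" and kn: "real k \<le> 2 * real n + 1"
  shows "\<bar>real n * (1 - \<delta>) * (real n + \<alpha>) * real k / (2 * real n + \<delta> + 1)\<bar>
    \<le> \<bar>1 - \<delta>\<bar> * (1 + \<bar>\<alpha>\<bar>) * (real n)\<^sup>2"
proof -
  have W: "0 < 2 * real n + \<delta> + 1" "real k / (2 * real n + \<delta> + 1) \<le> 1"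
    using kn \<delta>_pos by simp_all
  have "\<bar>real n + \<alpha>\<bar> \<le> real n * (1 + \<bar>\<alpha>\<bar>)"
    using n1 abs_triangle_ineq[of "real n" \<alpha>] mult_left_mono[OF n1, of "\<bar>\<alpha>\<bar>"]
    by (simp add: algebra_simps)
  then have \<alpha>: "real n * \<bar>1 - \<delta>\<bar> * \<bar>real n + \<alpha>\<bar> \<le> real n * \<bar>1 - \<delta>\<bar> * (real n * (1 + \<bar>\<alpha>\<bar>))"
    by (rule mult_left_mono) simp
  have "\<bar>real n * (1 - \<delta>) * (real n + \<alpha>) * real k / (2 * real n + \<delta> + 1)\<bar>
      = real n * \<bar>1 - \<delta>\<bar> * \<bar>real n + \<alpha>\<bar> * (real k / (2 * real n + \<delta> + 1))"
    using W(1) by (simp add: abs_mult abs_divide)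
  also have "\<dots> \<le> real n * \<bar>1 - \<delta>\<bar> * (real n * (1 + \<bar>\<alpha>\<bar>)) * 1"
    by (rule mult_mono) (use W \<alpha> in simp_all)
  also have "\<dots> = \<bar>1 - \<delta>\<bar> * (1 + \<bar>\<alpha>\<bar>) * (real n)\<^sup>2"
    by (simp add: power2_eq_square algebra_simps)
  finally show ?thesis .
qed

lemma remainder_bound:
  obtains C where "0 \<le> C" "\<And>n k. 25 * scale + 75 \<le> real n \<Longrightarrow> k \<le> 2*n+1 \<Longrightarrow> \<bar>R n k\<bar> \<le> C / real n"
proof -
  define C where "C = \<bar>2 * \<alpha> * \<beta>\<bar> + 3 * \<bar>(\<delta> + 1) * (1 - a) - 2 * \<beta> - 2 * \<alpha> - \<alpha> * \<beta>\<bar>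
    + 9 * \<bar>a - \<delta> + \<alpha> + \<beta>\<bar> + \<bar>2 * \<beta> + 2 * \<alpha> * \<beta>\<bar> + 3 * \<bar>2 - 2 * a - 3 * \<beta> - 2 * \<alpha>\<bar> + \<bar>2 * \<beta>\<bar>
    + \<bar>1 - \<delta>\<bar> * (1 + \<bar>\<alpha>\<bar>)"
  have "\<bar>R n k\<bar> \<le> C / real n" if n: "25 * scale + 75 \<le> real n" and k: "k \<le> 2*n+1" for n k
  proof -
    have n1: "1 \<le> real n" and \<alpha>: "real n + \<alpha> \<noteq> 0"
      using n scale_bounds by linarith+
    then have n0: "0 < n"
      by simp
    have kn: "real k \<le> 2 * real n + 1"
      using of_nat_mono[OF k, where 'a=real] by simp
    have Z: "(real n)\<^sup>2 \<le> Z n" "0 < Z n"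
      using Z_lower[OF n] Z_pos[OF n] by simp_all
    have quad: "\<bar>2 * \<alpha> * \<beta> + ((\<delta> + 1) * (1 - a) - 2 * \<beta> - 2 * \<alpha> - \<alpha> * \<beta>) * real k
        + (a - \<delta> + \<alpha> + \<beta>) * (real k)\<^sup>2 + (2 * \<beta> + 2 * \<alpha> * \<beta>) * real n
        + (2 - 2 * a - 3 * \<beta> - 2 * \<alpha>) * real n * real k + 2 * \<beta> * (real n)\<^sup>2\<bar>
      \<le> (C - \<bar>1 - \<delta>\<bar> * (1 + \<bar>\<alpha>\<bar>)) * (real n)\<^sup>2"
      unfolding C_def by (rule order_trans[OF quadratic_form_bound]) (use n1 kn in simp_all)
    have frac: "\<bar>real n * (1 - \<delta>) * (real n + \<alpha>) * real k / (2 * real n + \<delta> + 1)\<bar>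
        \<le> \<bar>1 - \<delta>\<bar> * (1 + \<bar>\<alpha>\<bar>) * (real n)\<^sup>2"
      using n1 kn by (rule remainder_fraction_bound)
    have "real n * (real n)\<^sup>2 * \<bar>R n k\<bar> \<le> real n * Z n * \<bar>R n k\<bar>"
      by (intro mult_right_mono mult_left_mono Z(1)) simp_all
    also have "\<dots> = \<bar>real n * Z n * R n k\<bar>"
      using Z(2) by (simp add: abs_mult)
    also have "\<dots> \<le> C * (real n)\<^sup>2"
      using order_trans[OF abs_triangle_ineq4 add_mono[OF quad frac]]
      unfolding remainder_eq[OF n0 \<alpha>] by (simp add: left_diff_distrib)
    finally have "real n * \<bar>R n k\<bar> \<le> C"
      using n1 by (simp add: power2_eq_square)
    then show ?thesis
      using n1 by (simp add: field_simps)
  qed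
  moreover have "0 \<le> C"
    unfolding C_def by simp
  ultimately show thesis
    using that by blast
qed

lemma \<rho>_pos:
  assumes n: "25 * scale + 75 \<le> real n" and j: "real j < 4/5 * real n"
  shows "0 < \<rho> n j"
proof -
  have "0 < real n + \<alpha> - real j" "0 < real n + \<beta> - real j" "0 < 2 * real n + 2 - real j"
    "0 < 2 * real n + \<delta> - real j" "0 < a + real j"
    using n j scale_bounds a_pos \<delta>_pos by linarith+
  then show ?thesis
    unfolding \<rho>_def by (intro divide_pos_pos mult_pos_pos) auto
qed

lemma \<phi>_pos:
  assumes n: "25 * scale + 75 \<le> real n" and k: "real k \<le> 4/5 * real n"
  shows "0 < \<phi> n k"
  using k
proof (induction k)
  case 0
  then show ?case by simp
next
  case (Suc k)
  then show ?case
    using \<rho>_pos[OF n, of k] by (simp add: \<phi>_Suc)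
qed

lemma \<rho>_decay:
  assumes n: "25 * scale + 75 \<le> real n"
    and j: "7 * real n \<le> 10 * real j + 10" "j + 1 \<le> 2*n"
  shows "\<bar>\<rho> n j\<bar> \<le> 24/25"
proof -
  define x where "x = real n + \<alpha> - real j"
  define y where "y = real n + \<beta> - real j"
  define w where "w = 2 * real n + \<delta> - real j"
  define D where "D = (a + real j) * w * (real j + 1)"
  have j2: "real j + 1 \<le> 2 * real n"
    using of_nat_mono[OF j(2), where 'a=real] by simp
  have jbig: "100 + 50 * scale \<le> 3 * real j"
    using n j(1) by linarith
  have xy: "\<bar>x\<bar> \<le> 14/25 * real j" "\<bar>y\<bar> \<le> 14/25 * real j"
    unfolding x_def y_def by (rule abs_leI; use j(1) j2 jbig scale_bounds in linarith)+
  have w: "0 < w" "2 * real n + 2 - real j \<le> 3 * w"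
    unfolding w_def using j2 \<delta>_pos by simp_all
  have D: "0 < D"
    using a_pos w unfolding D_def by simp
  have "\<bar>(2 * real n + 2 - real j) * x * y\<bar> = (2 * real n + 2 - real j) * (\<bar>x\<bar> * \<bar>y\<bar>)"
    using j2 by (simp add: abs_mult)
  also have "\<dots> \<le> (3 * w) * ((14/25 * real j) * (14/25 * real j))"
    by (intro mult_mono xy w) (use w in simp_all)
  also have "\<dots> = 588/625 * w * (real j * real j)"
    by simp
  also have "\<dots> \<le> 588/625 * w * ((a + real j) * (real j + 1))"
    using a_pos w by (intro mult_left_mono) (simp_all add: algebra_simps)
  also have "\<dots> \<le> 24/25 * D"
    using D unfolding D_def by (simp add: algebra_simps)
  finally have "\<bar>(2 * real n + 2 - real j) * x * y\<bar> \<le> 24/25 * D" .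
  then show ?thesis
    using D unfolding \<rho>_def x_def[symmetric] y_def[symmetric] w_def[symmetric] D_def[symmetric]
    by (simp add: abs_divide pos_divide_le_eq)
qed

lemma \<rho>_last:
  assumes n: "25 * scale + 75 \<le> real n"
  shows "\<bar>\<rho> n (2*n)\<bar> \<le> 2 / \<delta>"
proof -
  define u where "u = real n - \<alpha>"
  define v where "v = real n - \<beta>"
  define D where "D = (a + 2 * real n) * (2 * real n + 1)"
  have \<rho>: "\<rho> n (2*n) = 2 * (u * v) / (D * \<delta>)"
    unfolding \<rho>_def D_def u_def v_def by (simp add: algebra_simps)
  have "\<bar>u\<bar> \<le> 2 * real n" "\<bar>v\<bar> \<le> 2 * real n"
    unfolding u_def v_def by (rule abs_leI; use n scale_bounds in linarith)+
  then have "\<bar>u * v\<bar> \<le> (2 * real n) * (2 * real n)"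
    unfolding abs_mult by (intro mult_mono) simp_all
  also have "\<dots> \<le> D"
    using a_pos unfolding D_def by (simp add: algebra_simps)
  finally have "\<bar>2 * (u * v)\<bar> \<le> 2 / \<delta> * (D * \<delta>)"
    using \<delta>_pos by simp
  moreover have "0 < D * \<delta>"
    using a_pos \<delta>_pos unfolding D_def by (simp add: add_pos_nonneg)
  ultimately show ?thesis
    unfolding \<rho> by (simp add: abs_divide pos_divide_le_eq)
qed

text \<open>\<open>\<phi> n\<close> is positive up to \<open>4n/5\<close>, and from \<open>7n/10\<close> on its term ratio \<open>\<rho> n\<close> is at
  most \<open>24/25\<close> in modulus; so beyond \<open>tail_start n\<close> it is smaller than \<open>\<phi> n (decay_start n)\<close>
  by the factor \<open>tail_ratio n\<close>.\<close>

definition decay_start :: "nat \<Rightarrow> nat" where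
  "decay_start n = 7 * n div 10"

definition tail_start :: "nat \<Rightarrow> nat" where
  "tail_start n = decay_start n + n div 10"

definition tail_ratio :: "nat \<Rightarrow> real" where
  "tail_ratio n = (24/25) ^ (n div 10) * (1 + 2 / \<delta>)"

lemma decay_start_bounds:
  "7 * real n \<le> 10 * real (decay_start n) + 10"
  "real (tail_start n) \<le> 4/5 * real n"
  "tail_start n \<le> 2 * n"
proof -
  have "10 * real (decay_start n) \<le> 7 * real n" "7 * real n < 10 * (real (decay_start n) + 1)"
    "10 * real (n div 10) \<le> real n"
    using real_div_mult_bounds[of 10 "7 * n"] real_div_mult_bounds[of 10 n]
    by (simp_all add: decay_start_def)
  then show "7 * real n \<le> 10 * real (decay_start n) + 10"
    and "real (tail_start n) \<le> 4/5 * real n"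
    by (simp_all add: tail_start_def)
  then have "real (tail_start n) \<le> real (2 * n)"
    by simp
  then show "tail_start n \<le> 2 * n"
    by (simp only: of_nat_le_iff)
qed

lemma \<phi>_decay_start_pos:
  assumes n: "25 * scale + 75 \<le> real n"
  shows "0 < \<phi> n (decay_start n)"
proof -
  have "real (decay_start n) \<le> real (tail_start n)"
    by (simp add: tail_start_def)
  then show ?thesis
    using \<phi>_pos[OF n] decay_start_bounds(2)[of n] by simp
qed

lemma \<phi>_decay:
  assumes n: "25 * scale + 75 \<le> real n" and i: "decay_start n + i \<le> 2*n"
  shows "\<bar>\<phi> n (decay_start n + i)\<bar> \<le> \<phi> n (decay_start n) * (24/25) ^ i"
  using i
proof (induction i)
  case 0
  then show ?case
    using \<phi>_decay_start_pos[OF n] by simp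
next
  case (Suc i)
  let ?j = "decay_start n + i"
  have "7 * real n \<le> 10 * real ?j + 10"
    using decay_start_bounds(1)[of n] by simp
  then have "\<bar>\<phi> n ?j\<bar> * \<bar>\<rho> n ?j\<bar> \<le> (\<phi> n (decay_start n) * (24/25) ^ i) * (24/25)"
    using Suc by (intro mult_mono \<rho>_decay[OF n]) simp_all
  then show ?case
    by (simp add: \<phi>_Suc abs_mult mult.assoc)
qed

lemma \<phi>_tail:
  assumes n: "25 * scale + 75 \<le> real n" and k: "tail_start n < k" "k \<le> 2*n+1"
  shows "\<bar>\<phi> n k\<bar> \<le> \<phi> n (decay_start n) * tail_ratio n"
proof -
  let ?K = "decay_start n" and ?L = "n div 10"
  have pos: "0 < \<phi> n ?K"
    by (rule \<phi>_decay_start_pos[OF n])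
  have geometric: "\<phi> n ?K * (24/25) ^ i \<le> \<phi> n ?K * (24/25) ^ ?L" if "?L \<le> i" for i
    using pos that by (intro mult_left_mono power_decreasing) simp_all
  have "\<phi> n ?K * (24/25) ^ ?L \<le> \<phi> n ?K * (24/25) ^ ?L * (1 + 2 / \<delta>)"
    using pos \<delta>_pos by simp
  then have step: "\<bar>\<phi> n (?K + i)\<bar> \<le> \<phi> n ?K * tail_ratio n" if "?L \<le> i" "?K + i \<le> 2*n" for i
    using \<phi>_decay[OF n that(2)] geometric[OF that(1)] unfolding tail_ratio_def
    by (simp add: mult.assoc)
  consider "k \<le> 2*n" | "k = 2*n+1"
    using k by linarith
  then show ?thesis
  proof cases
    case 1
    with k show ?thesis
      using step[of "k - ?K"] by (simp add: tail_start_def)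
  next
    case 2
    have "?L \<le> 2*n - ?K" "?K + (2*n - ?K) = 2*n"
      using decay_start_bounds(3)[of n] unfolding tail_start_def by arith+
    then have "\<bar>\<phi> n (2*n)\<bar> \<le> \<phi> n ?K * (24/25) ^ ?L"
      using \<phi>_decay[OF n, of "2*n - ?K"] geometric[of "2*n - ?K"] by simp
    then have "\<bar>\<phi> n (2*n)\<bar> * \<bar>\<rho> n (2*n)\<bar> \<le> (\<phi> n ?K * (24/25) ^ ?L) * (2 / \<delta>)"
      by (intro mult_mono \<rho>_last[OF n]) (use pos \<delta>_pos in simp_all)
    also have "\<dots> \<le> \<phi> n ?K * tail_ratio n"
      using pos \<delta>_pos unfolding tail_ratio_def by (simp add: algebra_simps)
    finally show ?thesis
      using 2 by (simp add: \<phi>_Suc abs_mult)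
  qed
qed

lemma denom_term_eq:
  assumes n: "25 * scale + 75 \<le> real n"
  shows "denom_term n k = \<phi> n k * ((2 * real n + 2 - real k) * (real n + \<alpha> - real k)) / Z n"
proof -
  from Z_pos[OF n] show ?thesis
    using denom_term_eq_\<phi>[of n k] unfolding Z_def by (simp add: field_simps)
qed

lemma denom_term_lower:
  assumes n: "25 * scale + 75 \<le> real n" and k: "real k \<le> 4/5 * real n"
  shows "\<phi> n k / 25 \<le> denom_term n k"
proof -
  define X where "X = (2 * real n + 2 - real k) * (real n + \<alpha> - real k)"
  have "real n * (real n / 10) \<le> X"
    unfolding X_def by (rule mult_mono) (use n k scale_bounds in linarith)+
  then have "real n * real n \<le> 10 * X"
    by simp
  moreover have "Z n \<le> (11/5 * real n) * (11/10 * real n)"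
    unfolding Z_def by (rule mult_mono) (use n scale_bounds in linarith)+
  then have "Z n * 50 \<le> 121 * (real n * real n)"
    by simp
  moreover have "0 \<le> real n * real n"
    by simp
  ultimately have "Z n / 25 \<le> X"
    by linarith
  moreover note Z_pos[OF n]
  ultimately show ?thesis
    using \<phi>_pos[OF n k] unfolding denom_term_eq[OF n] X_def[symmetric]
    by (simp add: field_simps)
qed

lemma denom_term_upper:
  assumes n: "25 * scale + 75 \<le> real n" and k: "k \<le> 2*n+1"
  shows "\<bar>denom_term n k\<bar> \<le> 4 * \<bar>\<phi> n k\<bar>"
proof -
  define X where "X = (2 * real n + 2 - real k) * (real n + \<alpha> - real k)"
  have kn: "real k \<le> 2 * real n + 1"
    using of_nat_mono[OF k, where 'a=real] by simp
  have "\<bar>2 * real n + 2 - real k\<bar> \<le> 2 * real n + 2"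
    by (rule abs_leI) (use kn in linarith)+
  moreover have "\<bar>real n + \<alpha> - real k\<bar> \<le> 4 * real n + 4 * \<alpha>"
    by (rule abs_leI) (use kn n scale_bounds of_nat_0_le_iff[of k] in linarith)+
  ultimately
  have "\<bar>X\<bar> \<le> (2 * real n + 2) * (4 * real n + 4 * \<alpha>)"
    unfolding X_def abs_mult by (intro mult_mono) simp_all
  also have "\<dots> = 4 * Z n"
    by (simp add: Z_def algebra_simps)
  finally have X: "\<bar>X\<bar> / Z n \<le> 4"
    using Z_pos[OF n] by (simp add: divide_le_eq)
  have "\<bar>denom_term n k\<bar> = \<bar>\<phi> n k\<bar> * (\<bar>X\<bar> / Z n)"
    using Z_pos[OF n] unfolding denom_term_eq[OF n] X_def[symmetric]
    by (simp add: abs_mult abs_divide)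
  also have "\<dots> \<le> \<bar>\<phi> n k\<bar> * 4"
    using X by (rule mult_left_mono) simp
  finally show ?thesis
    by simp
qed

lemma P_last_bound:
  assumes n: "25 * scale + 75 \<le> real n"
  shows "\<bar>P n (2*n+1) / (real n * Z n)\<bar> \<le> 1"
proof -
  have P: "P n (2*n+1) = - ((real n + 1 - \<beta>) * (real n + 1 - \<alpha>))"
    by (simp add: P_def algebra_simps)
  have "\<bar>real n + 1 - \<beta>\<bar> \<le> 2 * real n" "\<bar>real n + 1 - \<alpha>\<bar> \<le> 2 * real n"
    by (rule abs_leI; use n scale_bounds in linarith)+
  then have "\<bar>P n (2*n+1)\<bar> \<le> (2 * real n) * (2 * real n)"
    unfolding P abs_minus_cancel abs_mult by (intro mult_mono) simp_all
  also have "\<dots> \<le> real n * (real n)\<^sup>2"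
    using mult_right_mono[of 4 "real n" "real n * real n"] n scale_bounds
    by (simp add: power2_eq_square)
  also have "\<dots> \<le> real n * Z n"
    by (intro mult_left_mono Z_lower[OF n]) simp
  finally show ?thesis
    using Z_pos[OF n] n scale_bounds by (simp add: abs_divide abs_mult divide_le_eq)
qed

lemma numer_term_last_eq:
  "numer_term n (2*n+2) = numer_term n (2*n+1)
    * ((real n + 1 - \<alpha>) * (real n + 1 - \<beta>) / ((a + 2 * real n + 1) * \<delta> * (2 * real n + 2)))"
proof -
  have "(real (2*n+1) - real (2*n+2)) * (- (real n + \<beta>) + real (2*n+1))
      * (- (real n + \<alpha>) + real (2*n+1)) = - ((real n + 1 - \<alpha>) * (real n + 1 - \<beta>))"
    "(a + real (2*n+1)) * (- (2 * real n + \<delta> + 1) + real (2*n+1)) * (real (2*n+1) + 1)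
      = - ((a + 2 * real n + 1) * \<delta> * (2 * real n + 2))"
    by (simp_all add: algebra_simps)
  then have "numer_term n (Suc (2*n+1)) = numer_term n (2*n+1)
      * ((real n + 1 - \<alpha>) * (real n + 1 - \<beta>) / ((a + 2 * real n + 1) * \<delta> * (2 * real n + 2)))"
    unfolding hyp3F2_coeff_Suc by (simp only: minus_divide_divide)
  moreover have "Suc (2*n+1) = 2*n+2"
    by simp
  ultimately show ?thesis
    by simp
qed

lemma numer_term_last_bound:
  assumes n: "25 * scale + 75 \<le> real n"
  shows "\<bar>numer_term n (2*n+2)\<bar> \<le> \<bar>\<phi> n (2*n+1)\<bar>"
proof -
  define D where "D = (a + 2 * real n + 1) * \<delta> * (2 * real n + 2)"
  define r where "r = (real n + 1 - \<alpha>) * (real n + 1 - \<beta>) / D"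
  have D: "0 < D"
    using a_pos \<delta>_pos unfolding D_def by (simp add: add_pos_nonneg)
  have "numer_term n (2*n+1) * (2 * real n + \<delta> + 1) = \<phi> n (2*n+1) * \<delta>"
    using numer_term_eq_\<phi>[of "2*n+1" n] by simp
  then have "\<bar>numer_term n (2*n+1)\<bar> * \<bar>2 * real n + \<delta> + 1\<bar> = \<bar>\<phi> n (2*n+1)\<bar> * \<bar>\<delta>\<bar>"
    by (simp only: abs_mult[symmetric])
  then have numer_term: "\<bar>numer_term n (2*n+1)\<bar> \<le> \<bar>\<phi> n (2*n+1)\<bar> * \<delta>"
    using mult_left_mono[of 1 "2 * real n + \<delta> + 1" "\<bar>numer_term n (2*n+1)\<bar>"] \<delta>_pos
    by (simp add: abs_of_pos)
  have "\<bar>real n + 1 - \<alpha>\<bar> \<le> 2 * real n" "\<bar>real n + 1 - \<beta>\<bar> \<le> 2 * real n"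
    by (rule abs_leI; use n scale_bounds in linarith)+
  then have "\<bar>(real n + 1 - \<alpha>) * (real n + 1 - \<beta>)\<bar> \<le> (2 * real n) * (2 * real n)"
    unfolding abs_mult by (intro mult_mono) simp_all
  also have "\<dots> \<le> (a + 2 * real n + 1) * (2 * real n + 2)"
    using a_pos by (intro mult_mono) simp_all
  also have "\<dots> = 1 / \<delta> * D"
    using \<delta>_pos unfolding D_def by (simp add: field_simps)
  finally have r: "\<bar>r\<bar> \<le> 1 / \<delta>"
    using D unfolding r_def by (simp add: abs_divide pos_divide_le_eq)
  have "\<bar>numer_term n (2*n+2)\<bar> \<le> (\<bar>\<phi> n (2*n+1)\<bar> * \<delta>) * (1 / \<delta>)"
    unfolding numer_term_last_eq D_def[symmetric] r_def[symmetric] abs_mult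
    by (intro mult_mono numer_term r) (use \<delta>_pos in simp_all)
  then show ?thesis
    using \<delta>_pos by simp
qed

definition denom_sum :: "nat \<Rightarrow> real" where
  "denom_sum n = (\<Sum>k\<le>2*n+1. denom_term n k)"

definition numer_sum :: "nat \<Rightarrow> real" where
  "numer_sum n = (\<Sum>k\<le>2*n+2. numer_term n k)"

definition tail_bound :: "nat \<Rightarrow> real" where
  "tail_bound n = \<phi> n (decay_start n) * tail_ratio n"

lemma tail_bound_nonneg:
  assumes n: "25 * scale + 75 \<le> real n"
  shows "0 \<le> tail_bound n"
  using \<phi>_decay_start_pos[OF n] \<delta>_pos by (simp add: tail_bound_def tail_ratio_def)

lemma sum_bulk_tail:
  "(\<Sum>k\<le>2*n+1. f k) = (\<Sum>k\<le>tail_start n. f k) + (\<Sum>k\<in>{tail_start n<..2*n+1}. f k)"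
proof -
  have "tail_start n \<le> 2*n+1"
    using decay_start_bounds(3)[of n] by simp
  then have "(\<Sum>k\<le>2*n+1. f k) = sum f ({..tail_start n} \<union> {tail_start n<..2*n+1})"
    by (simp only: ivl_disj_un_one(3))
  also have "\<dots> = (\<Sum>k\<le>tail_start n. f k) + (\<Sum>k\<in>{tail_start n<..2*n+1}. f k)"
    by (rule sum.union_disjoint) auto
  finally show ?thesis .
qed

lemma tail_sums:
  assumes n: "25 * scale + 75 \<le> real n"
  shows "(\<Sum>k\<in>{tail_start n<..2*n+1}. \<bar>\<phi> n k\<bar>) \<le> (2 * real n + 1) * tail_bound n"
    and "\<bar>\<Sum>k\<in>{tail_start n<..2*n+1}. denom_term n k\<bar> \<le> 4 * ((2 * real n + 1) * tail_bound n)"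
proof -
  let ?T = "{tail_start n<..2*n+1}"
  note tail_bound_nonneg[OF n]
  moreover have "real (card ?T) \<le> 2 * real n + 1"
    by simp
  ultimately have "real (card ?T) * tail_bound n \<le> (2 * real n + 1) * tail_bound n"
    by (rule mult_right_mono[rotated])
  moreover have "(\<Sum>k\<in>?T. \<bar>\<phi> n k\<bar>) \<le> real (card ?T) * tail_bound n"
    using \<phi>_tail[OF n] unfolding tail_bound_def by (intro sum_bounded_above) simp
  ultimately show tail: "(\<Sum>k\<in>?T. \<bar>\<phi> n k\<bar>) \<le> (2 * real n + 1) * tail_bound n"
    by linarith
  have "\<bar>\<Sum>k\<in>?T. denom_term n k\<bar> \<le> (\<Sum>k\<in>?T. 4 * \<bar>\<phi> n k\<bar>)"
    using denom_term_upper[OF n] by (intro order_trans[OF sum_abs] sum_mono) simp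
  with tail show "\<bar>\<Sum>k\<in>?T. denom_term n k\<bar> \<le> 4 * ((2 * real n + 1) * tail_bound n)"
    by (simp add: sum_distrib_left[symmetric])
qed

lemma bulk_sums:
  assumes n: "25 * scale + 75 \<le> real n"
  shows "\<phi> n (decay_start n) / 25 \<le> (\<Sum>k\<le>tail_start n. denom_term n k)"
    and "(\<Sum>k\<le>tail_start n. \<bar>\<phi> n k\<bar>) \<le> 25 * (\<Sum>k\<le>tail_start n. denom_term n k)"
proof -
  have bulk: "0 < \<phi> n k" "\<phi> n k / 25 \<le> denom_term n k" if "k \<le> tail_start n" for k
  proof -
    have "real k \<le> 4/5 * real n"
      using that decay_start_bounds(2)[of n] of_nat_mono[OF that, where 'a=real] by linarith
    then show "0 < \<phi> n k" "\<phi> n k / 25 \<le> denom_term n k"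
      using \<phi>_pos[OF n] denom_term_lower[OF n] by simp_all
  qed
  have "denom_term n (decay_start n) \<le> (\<Sum>k\<le>tail_start n. denom_term n k)"
    using bulk by (intro member_le_sum) (fastforce simp: tail_start_def)+
  with bulk(2)[of "decay_start n"] show "\<phi> n (decay_start n) / 25
      \<le> (\<Sum>k\<le>tail_start n. denom_term n k)"
    by (simp add: tail_start_def)
  have "(\<Sum>k\<le>tail_start n. \<bar>\<phi> n k\<bar>) \<le> (\<Sum>k\<le>tail_start n. 25 * denom_term n k)"
    using bulk by (intro sum_mono) fastforce
  then show "(\<Sum>k\<le>tail_start n. \<bar>\<phi> n k\<bar>) \<le> 25 * (\<Sum>k\<le>tail_start n. denom_term n k)"
    by (simp add: sum_distrib_left)
qed

lemma denom_lower:
  assumes n: "25 * scale + 75 \<le> real n" and small: "4 * (2 * real n + 1) * tail_ratio n \<le> 1/50"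
  shows "\<phi> n (decay_start n) / 50 \<le> denom_sum n"
proof -
  have "4 * ((2 * real n + 1) * tail_bound n) \<le> \<phi> n (decay_start n) / 50"
    using mult_left_mono[OF small less_imp_le[OF \<phi>_decay_start_pos[OF n]]]
    by (simp add: tail_bound_def algebra_simps)
  then show ?thesis
    using sum_bulk_tail[of "denom_term n" n] bulk_sums(1)[OF n] tail_sums(2)[OF n]
      unfolding denom_sum_def by linarith
qed

lemma abs_\<phi>_sum_le:
  assumes n: "25 * scale + 75 \<le> real n"
  shows "(\<Sum>k\<le>2*n+1. \<bar>\<phi> n k\<bar>) \<le> 25 * denom_sum n + 101 * ((2 * real n + 1) * tail_bound n)"
  using sum_bulk_tail[of "denom_term n" n] sum_bulk_tail[of "\<lambda>k. \<bar>\<phi> n k\<bar>" n]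
    bulk_sums(2)[OF n] tail_sums[OF n] unfolding denom_sum_def by linarith

lemma numer_deviation:
  assumes n: "25 * scale + 75 \<le> real n"
    and R: "\<And>k. k \<le> 2*n+1 \<Longrightarrow> \<bar>R n k\<bar> \<le> C / real n"
  shows "\<bar>numer_sum n - 2 * denom_sum n\<bar> \<le> C / real n * (\<Sum>k\<le>2*n+1. \<bar>\<phi> n k\<bar>) + 2 * tail_bound n"
proof -
  have last: "\<bar>\<phi> n (2*n+1)\<bar> \<le> tail_bound n"
    using \<phi>_tail[OF n, of "2*n+1"] decay_start_bounds(3)[of n] unfolding tail_bound_def by simp
  have "\<bar>\<phi> n k * R n k\<bar> \<le> \<bar>\<phi> n k\<bar> * (C / real n)" if "k \<le> 2*n+1" for k
    unfolding abs_mult by (rule mult_left_mono[OF R[OF that]]) simp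
  then have "\<bar>\<Sum>k\<le>2*n+1. \<phi> n k * R n k\<bar> \<le> (\<Sum>k\<le>2*n+1. \<bar>\<phi> n k\<bar> * (C / real n))"
    by (intro order_trans[OF sum_abs] sum_mono) simp
  also have "\<dots> = C / real n * (\<Sum>k\<le>2*n+1. \<bar>\<phi> n k\<bar>)"
    unfolding sum_distrib_left by (simp add: mult.commute)
  finally have bulk: "\<bar>\<Sum>k\<le>2*n+1. \<phi> n k * R n k\<bar> \<le> C / real n * (\<Sum>k\<le>2*n+1. \<bar>\<phi> n k\<bar>)" .
  have boundary: "\<bar>\<phi> n (2*n+1) * P n (2*n+1) / (real n * Z n)\<bar> \<le> tail_bound n"
    using mult_mono[OF last P_last_bound[OF n] tail_bound_nonneg[OF n] abs_ge_zero]
    by (simp add: abs_mult)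
  have \<alpha>: "real n + \<alpha> \<noteq> 0"
    using n scale_bounds by linarith
  have triangle: "\<bar>x + y + z\<bar> \<le> \<bar>x\<bar> + \<bar>y\<bar> + \<bar>z\<bar>" for x y z :: real
    by linarith
  show ?thesis
    unfolding denom_sum_def numer_sum_def numer_minus_twice_denom[OF \<alpha>]
    using add_mono[OF add_mono[OF bulk boundary] order_trans[OF numer_term_last_bound[OF n] last]]
    by (intro order_trans[OF triangle]) simp
qed

lemma numer_deviation_le_denom:
  assumes n: "25 * scale + 75 \<le> real n"
    and C: "0 \<le> C" "\<And>k. k \<le> 2*n+1 \<Longrightarrow> \<bar>R n k\<bar> \<le> C / real n"
  shows "\<bar>numer_sum n - 2 * denom_sum n\<bar>
      \<le> 25 * C / real n * denom_sum n + (303 * C + 2) * tail_bound n"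
proof -
  let ?E = "tail_bound n"
  have n1: "1 \<le> real n"
    using n scale_bounds by linarith
  have "\<bar>numer_sum n - 2 * denom_sum n\<bar>
      \<le> C / real n * (25 * denom_sum n + 101 * ((2 * real n + 1) * ?E)) + 2 * ?E"
    using numer_deviation[OF n C(2)] mult_left_mono[OF abs_\<phi>_sum_le[OF n], of "C / real n"] C(1)
    by simp
  also have "\<dots> = 25 * C / real n * denom_sum n + (101 * C * ((2 * real n + 1) / real n) + 2) * ?E"
    using n1 by (simp add: field_simps)
  also have "\<dots> \<le> 25 * C / real n * denom_sum n + (303 * C + 2) * ?E"
  proof -
    have "(2 * real n + 1) / real n \<le> 3"
      using n1 by (simp add: divide_le_eq)
    from mult_left_mono[OF this C(1)] tail_bound_nonneg[OF n] show ?thesis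
      by (intro add_left_mono mult_right_mono) simp_all
  qed
  finally show ?thesis .
qed

lemma ratio_deviation:
  assumes n: "25 * scale + 75 \<le> real n" and small: "4 * (2 * real n + 1) * tail_ratio n \<le> 1/50"
    and C: "0 \<le> C" "\<And>k. k \<le> 2*n+1 \<Longrightarrow> \<bar>R n k\<bar> \<le> C / real n"
  shows "\<bar>numer_sum n / denom_sum n - 2\<bar> \<le> 25 * C / real n + 50 * (303 * C + 2) * tail_ratio n"
proof -
  let ?\<Phi> = "\<phi> n (decay_start n)" and ?E = "tail_bound n"
  have \<Phi>: "0 < ?\<Phi>"
    by (rule \<phi>_decay_start_pos[OF n])
  have denom_lb: "?\<Phi> / 50 \<le> denom_sum n"
    by (rule denom_lower[OF n small])
  with \<Phi> have denom_pos: "0 < denom_sum n"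
    by linarith
  have "?E / denom_sum n \<le> ?E / (?\<Phi> / 50)"
    using denom_lb \<Phi> tail_bound_nonneg[OF n] by (intro divide_left_mono) simp_all
  then have ratio: "?E / denom_sum n \<le> 50 * tail_ratio n"
    using \<Phi> by (simp add: tail_bound_def)
  have "numer_sum n / denom_sum n - 2 = (numer_sum n - 2 * denom_sum n) / denom_sum n"
    using denom_pos by (simp add: field_simps)
  then have "\<bar>numer_sum n / denom_sum n - 2\<bar> = \<bar>numer_sum n - 2 * denom_sum n\<bar> / denom_sum n"
    using denom_pos by (simp add: abs_divide)
  also have "\<dots> \<le> (25 * C / real n * denom_sum n + (303 * C + 2) * ?E) / denom_sum n"
    using numer_deviation_le_denom[OF n C] denom_pos by (rule divide_right_mono[OF _ less_imp_le])
  also have "\<dots> = 25 * C / real n + (303 * C + 2) * (?E / denom_sum n)"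
    using denom_pos by (simp add: add_divide_distrib)
  also have "\<dots> \<le> 25 * C / real n + (303 * C + 2) * (50 * tail_ratio n)"
    using ratio C(1) by (intro add_left_mono mult_left_mono) simp_all
  finally show ?thesis
    by (simp add: mult_ac)
qed

lemma tail_ratio_tendsto_0:
  shows "tail_ratio \<longlonglongrightarrow> 0" and "(\<lambda>n. 4 * (2 * real n + 1) * tail_ratio n) \<longlonglongrightarrow> 0"
proof -
  have geometric: "(\<lambda>n. (24/25::real) ^ (n div 10)) \<longlonglongrightarrow> 0"
    by (rule tendsto_power_zero[OF filterlim_at_top_div_const_nat]) simp_all
  then have "(\<lambda>n. (24/25) ^ (n div 10) * (1 + 2 / \<delta>)) \<longlonglongrightarrow> 0 * (1 + 2 / \<delta>)"
    by (intro tendsto_intros)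
  then show "tail_ratio \<longlonglongrightarrow> 0"
    by (simp add: tail_ratio_def[abs_def])
  have "(\<lambda>n. real n * (24/25::real) ^ (n div 10)) \<longlonglongrightarrow> 0"
    by (rule real_mult_power_div_tendsto_0) simp_all
  then have "(\<lambda>n. (8 * (real n * (24/25) ^ (n div 10)) + 4 * (24/25) ^ (n div 10)) * (1 + 2 / \<delta>))
      \<longlonglongrightarrow> (8 * 0 + 4 * 0) * (1 + 2 / \<delta>)"
    by (intro tendsto_intros geometric)
  moreover have "(\<lambda>n. (8 * (real n * (24/25) ^ (n div 10)) + 4 * (24/25) ^ (n div 10))
      * (1 + 2 / \<delta>))
      = (\<lambda>n. 4 * (2 * real n + 1) * tail_ratio n)"
    using \<delta>_pos by (intro ext) (simp add: tail_ratio_def field_simps)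
  ultimately show "(\<lambda>n. 4 * (2 * real n + 1) * tail_ratio n) \<longlonglongrightarrow> 0"
    by simp
qed

theorem transformed_ratio_tendsto_2:
  "(\<lambda>n. hyp3F2_term (2*n+2) (- (real n + \<beta>)) (- (real n + \<alpha>)) a (- (2 * real n + \<delta> + 1)) 1
      / hyp3F2_term (2*n+1) (- (real n + \<beta>)) (- (real n + \<alpha>) + 1) a (- (2 * real n + \<delta>)) 1)
   \<longlonglongrightarrow> 2"
proof -
  obtain C where C: "0 \<le> C"
    "\<And>n k. 25 * scale + 75 \<le> real n \<Longrightarrow> k \<le> 2*n+1 \<Longrightarrow> \<bar>R n k\<bar> \<le> C / real n"
    using remainder_bound by blast
  have "\<forall>\<^sub>F n in sequentially. 4 * (2 * real n + 1) * tail_ratio n < 1/50"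
    using tail_ratio_tendsto_0(2) by (rule order_tendstoD) simp
  moreover have "\<forall>\<^sub>F n in sequentially. 25 * scale + 75 \<le> real n"
    using filterlim_real_sequentially unfolding filterlim_at_top by (rule spec)
  ultimately have "\<forall>\<^sub>F n in sequentially. norm (numer_sum n / denom_sum n - 2)
      \<le> 25 * C / real n + 50 * (303 * C + 2) * tail_ratio n"
  proof eventually_elim
    case (elim n)
    then show ?case
      using ratio_deviation[OF elim(2) less_imp_le[OF elim(1)] C(1) C(2)[OF elim(2)]] by simp
  qed
  moreover have "(\<lambda>n. 25 * C / real n + 50 * (303 * C + 2) * tail_ratio n)
      \<longlonglongrightarrow> 0 + 50 * (303 * C + 2) * 0"
    by (intro tendsto_intros tail_ratio_tendsto_0(1))
  then have "(\<lambda>n. 25 * C / real n + 50 * (303 * C + 2) * tail_ratio n) \<longlonglongrightarrow> 0"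
    by simp
  ultimately have "(\<lambda>n. numer_sum n / denom_sum n - 2) \<longlonglongrightarrow> 0"
    by (rule Lim_null_comparison)
  then show ?thesis
    unfolding hyp3F2_term_1_eq_sum denom_sum_def[symmetric] numer_sum_def[symmetric]
    by (rule LIM_zero_cancel)
qed

end

section \<open>The ratio of the original series\<close>

lemma pochhammer_Suc_div_pochhammer_Suc:
  fixes e b :: "'a::field"
  shows "pochhammer (e - 1) (Suc m) / pochhammer b (Suc m)
      = (e - 1) / (b + of_nat m) * (pochhammer e m / pochhammer b m)"
proof -
  have "pochhammer (e - 1) (Suc m) = (e - 1) * pochhammer e m"
    by (simp add: pochhammer_rec)
  then show ?thesis
    by (simp add: pochhammer_Suc divide_inverse inverse_mult_distrib ac_simps)
qed

lemma hyp3F2_ratio_transform: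
  fixes a b c d :: real
  assumes a: "0 < a" and b: "0 < b"
    and \<alpha>: "\<alpha> = c + 1 - a" and \<beta>: "\<beta> = d - a" and \<delta>: "\<delta> = c + d - a - b" and "0 < \<delta>"
  shows "hyp3F2_term (2*n+2) (c + real n + 1) (d + real n) a b 1
      / hyp3F2_term (2*n+1) (c + real n) (d + real n) a b 1
    = - (2 * real n + \<delta> + 1) / (b + real (2*n+1)) *
      (hyp3F2_term (2*n+2) (- (real n + \<beta>)) (- (real n + \<alpha>)) a (- (2 * real n + \<delta> + 1)) 1
       / hyp3F2_term (2*n+1) (- (real n + \<beta>)) (- (real n + \<alpha>) + 1) a (- (2 * real n + \<delta>)) 1)"
proof -
  have nonzero: "pochhammer a m \<noteq> 0" "pochhammer b m \<noteq> 0" for m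
    using pochhammer_pos[OF a, of m] pochhammer_pos[OF b, of m] by simp_all
  have params: "a - (d + real n) = - (real n + \<beta>)" "a - (c + real n) = - (real n + \<alpha>) + 1"
    "a - (c + real n + 1) = - (real n + \<alpha>)"
    "a + b - (c + real n) - (d + real n) = - (2 * real n + \<delta>)"
    "a + b - (c + real n + 1) - (d + real n) = - (2 * real n + \<delta>) - 1"
    "- (2 * real n + \<delta>) - 1 = - (2 * real n + \<delta> + 1)"
    unfolding \<alpha> \<beta> \<delta> by simp_all
  have e: "pochhammer (a + b - (c + real n) - (d + real n)) (2*n+1) \<noteq> 0"
    "pochhammer (a + b - (c + real n + 1) - (d + real n)) (2*n+2) \<noteq> 0"
    using \<open>0 < \<delta>\<close> unfolding \<delta> by (auto simp: pochhammer_eq_0_iff)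
  define p where "p = pochhammer (- (2 * real n + \<delta>)) (2*n+1) / pochhammer b (2*n+1)"
  have p: "p \<noteq> 0"
    using e(1) nonzero(2)[of "2*n+1"] unfolding params by (simp add: p_def)
  have "Suc (2*n+1) = 2*n+2"
    by simp
  then have prefactor: "pochhammer (- (2 * real n + \<delta> + 1)) (2*n+2) / pochhammer b (2*n+2)
      = - (2 * real n + \<delta> + 1) / (b + real (2*n+1)) * p"
    using pochhammer_Suc_div_pochhammer_Suc[of "- (2 * real n + \<delta>)" "2*n+1" b]
    unfolding params p_def by simp
  have "hyp3F2_term (2*n+1) (c + real n) (d + real n) a b 1 =
      p * hyp3F2_term (2*n+1) (- (real n + \<beta>)) (- (real n + \<alpha>) + 1) a (- (2 * real n + \<delta>)) 1"
    using hyp3F2_term_transform[OF nonzero(1,2) e(1)] unfolding params p_def .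
  moreover have "hyp3F2_term (2*n+2) (c + real n + 1) (d + real n) a b 1 =
      (- (2 * real n + \<delta> + 1) / (b + real (2*n+1)) * p) *
      hyp3F2_term (2*n+2) (- (real n + \<beta>)) (- (real n + \<alpha>)) a (- (2 * real n + \<delta> + 1)) 1"
    using hyp3F2_term_transform[OF nonzero(1,2) e(2)] unfolding params prefactor .
  ultimately show ?thesis
    using p by simp
qed

lemma prefactor_ratio_tendsto:
  fixes b \<delta> :: real
  assumes "0 < b"
  shows "(\<lambda>n. - (2 * real n + \<delta> + 1) / (b + real (2*n+1))) \<longlonglongrightarrow> - 1"
proof -
  have "filterlim (\<lambda>n. (b + 1) + 2 * real n) at_infinity sequentially"
    by (intro filterlim_at_top_imp_at_infinity filterlim_tendsto_add_at_top[OF tendsto_const]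
        filterlim_tendsto_pos_mult_at_top[OF tendsto_const _ filterlim_real_sequentially]) simp
  then have "(\<lambda>n. - 1 + (b - \<delta>) / ((b + 1) + 2 * real n)) \<longlonglongrightarrow> - 1 + 0"
    by (intro tendsto_add[OF tendsto_const] tendsto_divide_0[OF tendsto_const])
  moreover have "- 1 + (b - \<delta>) / ((b + 1) + 2 * real n)
      = - (2 * real n + \<delta> + 1) / (b + real (2*n+1))" for n
    using assms by (simp add: field_simps)
  ultimately show ?thesis
    by simp
qed

theorem corollary5:
  fixes a b c d :: real
  assumes "a > 0" and "b > 0" and "c + d - a - b > 0"
    and "\<forall>j::nat. d - a \<noteq> - real j"
    and "\<forall>j::nat. d - b \<noteq> - real j"
    and "\<forall>j::nat. c + 1 - a \<noteq> - real j"
    and "\<forall>j::nat. c - b \<noteq> - real j"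
  shows "(\<lambda>n. hyp3F2_term (2*n+2) (c + real n + 1) (d + real n) a b 1
              / hyp3F2_term (2*n+1) (c + real n) (d + real n) a b 1)
         \<longlonglongrightarrow> -2"
proof -
  interpret terminating_3F2_ratio a "c + 1 - a" "d - a" "c + d - a - b"
    using assms by unfold_locales
  from tendsto_mult[OF prefactor_ratio_tendsto[where \<delta> = "c + d - a - b", OF assms(2)]
      transformed_ratio_tendsto_2]
  show ?thesis
    unfolding hyp3F2_ratio_transform[OF assms(1,2) refl refl refl assms(3)] by simp
qed

end
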